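(* Let $p>3$ be a prime and $f:V_n^{(p)}\to\mathbb{F}_p$ a function with $f(0)=0$. If $f(x)=f(-x)$ for all $x\in V_n^{(p)}$ and $\sum_{i\in\mathbb{F}_p^*}i^2N_i(f)=0$ in $\mathbb{F}_p$, where $N_i(f)=\#\{x\in V_n^{(p)}:f(x)=i\}$, then the linear code $\mathcal{C}_f=\{(af(x)+\langle b,x\rangle_n)_{x\in V_n^{(p)}\setminus\{0\}}:a\in\mathbb{F}_p,b\in V_n^{(p)}\}$ is self-orthogonal.
   Context: $V_n^{(p)}$ is an $n$-dimensional $\mathbb{F}_p$-vector space with a non-degenerate symmetric bilinear form $\langle\cdot,\cdot\rangle_n$. A linear code $\mathcal{C}\subseteq\mathbb{F}_p^N$ is self-orthogonal if $\mathcal{C}\subseteq\mathcal{C}^\perp$ with respect to the standard dot product. *)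

theory Defs
  imports "HOL-Analysis.Analysis"
begin

text \<open>V_n over F_p is modelled as 'a ^ 'n with CARD('a) = p prime; the form is an
arbitrary non-degenerate symmetric bilinear form on it.\<close>

definition nondeg_sym_bilinear :: "('a::field ^ 'n \<Rightarrow> 'a ^ 'n \<Rightarrow> 'a) \<Rightarrow> bool" where
  "nondeg_sym_bilinear B \<longleftrightarrow>
     (\<forall>x y z. B (x + y) z = B x z + B y z) \<and>
     (\<forall>c x z. B (c *s x) z = c * B x z) \<and>
     (\<forall>x y. B x y = B y x) \<and>
     (\<forall>x. (\<forall>y. B x y = 0) \<longrightarrow> x = 0)"

definition N_val :: "('v \<Rightarrow> 'a) \<Rightarrow> 'a \<Rightarrow> nat" where
  "N_val f i = card {x. f x = i}"

text \<open>The code C_f; a codeword is a function on V, read on coordinates V minus 0.\<close>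
definition code_f :: "('a::field ^ 'n \<Rightarrow> 'a ^ 'n \<Rightarrow> 'a) \<Rightarrow> ('a ^ 'n \<Rightarrow> 'a) \<Rightarrow> ('a ^ 'n \<Rightarrow> 'a) set" where
  "code_f B f = {(\<lambda>x. a * f x + B b x) | a b. True}"

definition self_orthogonal :: "'i set \<Rightarrow> ('i \<Rightarrow> 'a::comm_ring) set \<Rightarrow> bool" where
  "self_orthogonal I C \<longleftrightarrow> (\<forall>c\<in>C. \<forall>d\<in>C. (\<Sum>x\<in>I. c x * d x) = 0)"

end

theory Submission
  imports Defs "HOL-Number_Theory.Residues"
begin

text \<open>Expanding a product of two codewords leaves three kinds of sums over the nonzero
vectors. The sums of f x * B b x and of B b x * B b' x vanish because a sum over
V \ {0} is invariant under x \<mapsto> c x, while the summand picks up the factor -1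
(for c = -1, using that f is even) resp. 4 (for c = 2); as p > 3 neither factor
is 1. The sum of f x ^ 2 is the sum of i ^ 2 N_i(f), which is 0 by hypothesis.\<close>

lemma of_nat_eq_0_iff_prime_card_dvd:
  assumes "prime CARD('a::field)"
  shows "(of_nat m :: 'a) = 0 \<longleftrightarrow> CARD('a) dvd m"
proof -
  have "CHAR('a) = CARD('a)"
    using assms CHAR_dvd_CARD[where 'a='a] CHAR_not_1[where 'a='a]
    unfolding prime_nat_iff by auto
  then show ?thesis
    by (simp add: of_nat_eq_0_iff_char_dvd)
qed

lemma sum_punctured_eq_0_if_homogeneous:
  fixes g :: "'a::field ^ 'n \<Rightarrow> 'a"
  assumes "c \<noteq> 0" and "k \<noteq> 1" and homogeneous: "\<And>x. g (c *s x) = k * g x"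
  shows "(\<Sum>x\<in>UNIV - {0}. g x) = 0"
proof -
  have "(\<Sum>x\<in>UNIV - {0}. g x) = (\<Sum>x\<in>UNIV - {0}. g (c *s x))"
    by (rule sum.reindex_bij_witness[of _ "\<lambda>x. c *s x" "\<lambda>x. inverse c *s x"])
       (use \<open>c \<noteq> 0\<close> in auto)
  also have "\<dots> = k * (\<Sum>x\<in>UNIV - {0}. g x)"
    by (simp add: homogeneous sum_distrib_left)
  finally have "(1 - k) * (\<Sum>x\<in>UNIV - {0}. g x) = 0"
    by (simp add: algebra_simps)
  with \<open>k \<noteq> 1\<close> show ?thesis by simp
qed

lemma nondeg_sym_bilinear_scale_right:
  assumes "nondeg_sym_bilinear B"
  shows "B b (c *s x) = c * B b x"
  using assms unfolding nondeg_sym_bilinear_def by metis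

lemma sum_comp_eq_sum_N_val:
  fixes f :: "'v \<Rightarrow> 'a" and g :: "'a \<Rightarrow> 'b::semiring_1"
  assumes "finite (UNIV :: 'v set)" and "finite (UNIV :: 'a set)"
  shows "(\<Sum>x\<in>UNIV. g (f x)) = (\<Sum>i\<in>UNIV. of_nat (N_val f i) * g i)"
proof -
  have "(\<Sum>x\<in>UNIV. g (f x)) = (\<Sum>i\<in>UNIV. \<Sum>x\<in>{x. f x = i}. g (f x))"
    using sum.group[OF assms, of f "\<lambda>x. g (f x)"] by simp
  also have "\<dots> = (\<Sum>i\<in>UNIV. of_nat (N_val f i) * g i)"
    by (simp add: N_val_def)
  finally show ?thesis .
qed

lemma self_orthogonal_code_fI:
  assumes "(\<Sum>x\<in>I. f x * f x) = 0"
    and "\<And>b. (\<Sum>x\<in>I. f x * B b x) = 0"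
    and "\<And>b b'. (\<Sum>x\<in>I. B b x * B b' x) = 0"
  shows "self_orthogonal I (code_f B f)"
  unfolding self_orthogonal_def code_f_def
proof clarify
  fix a a' b b'
  have "(a * f x + B b x) * (a' * f x + B b' x) =
     a * a' * (f x * f x) + a * (f x * B b' x) + a' * (f x * B b x) + B b x * B b' x" for x
    by (simp add: algebra_simps)
  then show "(\<Sum>x\<in>I. (a * f x + B b x) * (a' * f x + B b' x)) = 0"
    by (simp add: sum.distrib flip: sum_distrib_left) (simp add: assms)
qed

lemma sum_square_punctured_eq_sum_N_val:
  fixes f :: "'v::zero \<Rightarrow> 'a::comm_semiring_1"
  assumes "finite (UNIV :: 'v set)" and "finite (UNIV :: 'a set)" and "f 0 = 0"
  shows "(\<Sum>x\<in>UNIV - {0}. f x * f x) = (\<Sum>i\<in>UNIV - {0}. i ^ 2 * of_nat (N_val f i))"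
proof -
  have "(\<Sum>x\<in>UNIV - {0}. f x * f x) = (\<Sum>x\<in>UNIV. f x ^ 2)"
    unfolding power2_eq_square using assms(1,3) by (intro sum.mono_neutral_left) auto
  also have "\<dots> = (\<Sum>i\<in>UNIV. of_nat (N_val f i) * i ^ 2)"
    by (rule sum_comp_eq_sum_N_val[OF assms(1,2)])
  also have "\<dots> = (\<Sum>i\<in>UNIV - {0}. i ^ 2 * of_nat (N_val f i))"
    using assms(2) by (intro sum.mono_neutral_cong_right) (auto simp: mult.commute)
  finally show ?thesis .
qed

lemma sum_even_times_bilinear_punctured_eq_0:
  fixes f :: "'a::field ^ 'n \<Rightarrow> 'a"
  assumes "nondeg_sym_bilinear B" and "\<forall>x. f x = f (- x)" and "(2::'a) \<noteq> 0"
  shows "(\<Sum>x\<in>UNIV - {0}. f x * B b x) = 0"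
proof (rule sum_punctured_eq_0_if_homogeneous[of "-1" "-1"])
  show "(-1::'a) \<noteq> 1"
    using assms(3) by (metis add_eq_0_iff one_add_one)
  show "f ((-1) *s x) * B b ((-1) *s x) = -1 * (f x * B b x)" for x
  proof -
    have "f ((-1) *s x) = f x"
      using assms(2) by (metis vector_sneg_minus1)
    moreover have "B b ((-1) *s x) = - B b x"
      using nondeg_sym_bilinear_scale_right[OF assms(1), of b "-1" x] by simp
    ultimately show ?thesis by simp
  qed
qed simp

lemma sum_bilinear_times_bilinear_punctured_eq_0:
  fixes B :: "'a::field ^ 'n \<Rightarrow> 'a ^ 'n \<Rightarrow> 'a"
  assumes "nondeg_sym_bilinear B" and "(2::'a) \<noteq> 0" and "(3::'a) \<noteq> 0"
  shows "(\<Sum>x\<in>UNIV - {0}. B b x * B b' x) = 0"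
proof (rule sum_punctured_eq_0_if_homogeneous[of 2 4])
  show "(4::'a) \<noteq> 1"
  proof
    assume "(4::'a) = 1"
    then have "(3::'a) + 1 = 0 + 1" by simp
    with assms(3) show False by (simp only: add_right_cancel)
  qed
  show "B b (2 *s x) * B b' (2 *s x) = 4 * (B b x * B b' x)" for x
    by (simp add: nondeg_sym_bilinear_scale_right[OF assms(1)])
qed (fact assms(2))

theorem lemma13:
  fixes B :: "'a::field ^ 'n \<Rightarrow> 'a ^ 'n \<Rightarrow> 'a"
    and f :: "'a ^ 'n \<Rightarrow> 'a"
    and p :: nat
  assumes "prime p" and "p > 3" and "CARD('a) = p"
    and "nondeg_sym_bilinear B"
    and "f 0 = 0"
    and "\<forall>x. f x = f (- x)"
    and "(\<Sum>i\<in>UNIV - {0}. i ^ 2 * of_nat (N_val f i)) = (0::'a)"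
  shows "self_orthogonal (UNIV - {0}) (code_f B f)"
proof -
  have finite_scalars: "finite (UNIV :: 'a set)" and finite_vectors: "finite (UNIV :: ('a ^ 'n) set)"
    using assms(2,3) by (auto intro: card_ge_0_finite)
  have two: "(2::'a) \<noteq> 0" and three: "(3::'a) \<noteq> 0"
    using of_nat_eq_0_iff_prime_card_dvd[where 'a='a, of 2]
      of_nat_eq_0_iff_prime_card_dvd[where 'a='a, of 3] assms(1-3)
    by (auto dest: dvd_imp_le)
  show ?thesis
  proof (rule self_orthogonal_code_fI)
    show "(\<Sum>x\<in>UNIV - {0}. f x * f x) = 0"
      using sum_square_punctured_eq_sum_N_val[of f] finite_vectors finite_scalars assms(5,7)
      by simp
    show "(\<Sum>x\<in>UNIV - {0}. f x * B b x) = 0" for b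
      using sum_even_times_bilinear_punctured_eq_0[OF assms(4,6) two] .
    show "(\<Sum>x\<in>UNIV - {0}. B b x * B b' x) = 0" for b b'
      using sum_bilinear_times_bilinear_punctured_eq_0[OF assms(4) two three] .
  qed
qed

end
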